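(* For $\alpha\in(0,\pi/2]$ and $d\in\mathbb{R}$ let $$f_\alpha(d)=960\alpha-8d^2(d^4-4d^2+20)\sin\alpha+d^2(3d^4-12d^2-4)\sin(2\alpha).$$ Then for every $\alpha\in(0,\pi/2]$, $f_\alpha(d)<0$ for all $d\in[5/2,\infty)$. *)

theory Defs
  imports Complex_Main
begin

definition f_alpha :: "real \<Rightarrow> real \<Rightarrow> real" where
  "f_alpha \<alpha> d = 960 * \<alpha> - 8 * d^2 * (d^4 - 4 * d^2 + 20) * sin \<alpha>
                 + d^2 * (3 * d^4 - 12 * d^2 - 4) * sin (2 * \<alpha>)"

end

theory Submission
  imports Defs "HOL-Analysis.Analysis"
begin

text \<open>With \<open>u = d\<^sup>2\<close>, \<open>f_alpha \<alpha> d = 960 \<alpha> - sin \<alpha> \<cdot> u ((8 - 6 cos \<alpha>)(u\<^sup>2 - 4u) + 160 + 8 cos \<alpha>)\<close>,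
  and the subtracted term grows with \<open>u\<close> once \<open>u \<ge> 4\<close>. So it suffices to treat \<open>d = 5/2\<close>, where
  the claim becomes \<open>960 \<alpha> < sin \<alpha> (1703.125 - 477.34375 cos \<alpha>)\<close>. Replacing \<open>sin\<close> and \<open>cos\<close>
  by their Taylor bounds turns this into a cubic inequality in \<open>\<alpha>\<^sup>2 \<le> (\<pi>/2)\<^sup>2\<close>.\<close>

lemma sin_ge_cubic_Taylor:
  fixes x :: real
  assumes "0 < x" "x \<le> pi"
  shows "x - x^3/6 \<le> sin x"
proof -
  obtain t where t: "0 < t" "t < x"
    "sin x = (\<Sum>m<4. sin_coeff m * x ^ m) + (sin (t + 1/2 * real 4 * pi) / fact 4) * x ^ 4"
    using Maclaurin_sin_expansion3[of 4 x] assms by auto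
  have "0 \<le> sin t"
    using t assms by (intro sin_ge_zero) auto
  moreover have "sin (t + 1/2 * real 4 * pi) = sin t"
    using sin_periodic[of t] by (simp add: algebra_simps)
  moreover have "(\<Sum>m<4. sin_coeff m * x ^ m) = x - x^3/6"
    by (simp add: sin_coeff_def lessThan_nat_numeral fact_numeral)
  ultimately show ?thesis
    using t by simp
qed

lemma cos_le_quartic_Taylor:
  fixes x :: real
  assumes "0 < x" "x \<le> pi/2"
  shows "cos x \<le> 1 - x^2/2 + x^4/24"
proof -
  obtain t where t: "0 < t" "t < x"
    "cos x = (\<Sum>m<6. cos_coeff m * x ^ m) + (cos (t + 1/2 * real 6 * pi) / fact 6) * x ^ 6"
    using Maclaurin_cos_expansion2[of x 6] assms by auto
  have "0 \<le> cos t"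
    using t assms by (intro cos_ge_zero) auto
  moreover have "cos (t + 1/2 * real 6 * pi) = - cos t"
  proof -
    have "t + 1/2 * real 6 * pi = (t + pi) + 2*pi"
      by simp
    then show ?thesis
      by (simp only: cos_periodic cos_periodic_pi)
  qed
  moreover have "(\<Sum>m<6. cos_coeff m * x ^ m) = 1 - x^2/2 + x^4/24"
    by (simp add: cos_coeff_def lessThan_nat_numeral fact_numeral)
  ultimately show ?thesis
    using t by simp
qed

lemma f_alpha_eq:
  "f_alpha \<alpha> d =
     960 * \<alpha> - sin \<alpha> * (d^2 * ((8 - 6 * cos \<alpha>) * ((d^2)^2 - 4 * d^2) + (160 + 8 * cos \<alpha>)))"
  unfolding f_alpha_def sin_double
  by (simp add: algebra_simps power2_eq_square power4_eq_xxxx)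

lemma cubic_mono_above_4:
  fixes u v k c :: real
  assumes "0 \<le> k" "0 \<le> c" "4 \<le> v" "v \<le> u"
  shows "v * (k * (v^2 - 4 * v) + c) \<le> u * (k * (u^2 - 4 * u) + c)"
proof -
  have "v * (v - 4) \<le> u * (u - 4)"
    using assms by (intro mult_mono) auto
  then have "k * (v^2 - 4 * v) \<le> k * (u^2 - 4 * u)"
    using assms(1) by (intro mult_left_mono) (auto simp: algebra_simps power2_eq_square)
  moreover have "0 \<le> k * (v * (v - 4))"
    using assms by simp
  then have "0 \<le> k * (v^2 - 4 * v)"
    by (simp add: power2_eq_square right_diff_distrib)
  ultimately show ?thesis
    using assms by (intro mult_mono) auto
qed

lemma f_alpha_antimono:
  assumes "0 \<le> sin \<alpha>" "2 \<le> e" "e \<le> d"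
  shows "f_alpha \<alpha> d \<le> f_alpha \<alpha> e"
proof -
  have "4 \<le> e^2"
    using power_mono[OF assms(2), of 2] by simp
  moreover have "e^2 \<le> d^2"
    using assms by (intro power_mono) auto
  moreover have "0 \<le> 8 - 6 * cos \<alpha>" "0 \<le> 160 + 8 * cos \<alpha>"
    using cos_le_one[of \<alpha>] cos_ge_minus_one[of \<alpha>] by linarith+
  ultimately have "e^2 * ((8 - 6 * cos \<alpha>) * ((e^2)^2 - 4 * e^2) + (160 + 8 * cos \<alpha>))
      \<le> d^2 * ((8 - 6 * cos \<alpha>) * ((d^2)^2 - 4 * d^2) + (160 + 8 * cos \<alpha>))"
    by (intro cubic_mono_above_4)
  then show ?thesis
    unfolding f_alpha_eq using assms(1) by (simp add: mult_left_mono)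
qed

lemma f_alpha_five_halves:
  "f_alpha \<alpha> (5/2) = 960 * \<alpha> - sin \<alpha> * (1703.125 - 477.34375 * cos \<alpha>)"
  unfolding f_alpha_eq by (simp add: field_simps power_divide)

text \<open>Bounding \<open>x\<^sup>3\<close> below by its tangent at the right endpoint \<open>b\<close> and \<open>x\<^sup>2\<close> above by
  its chord \<open>b x\<close> leaves a linear inequality.\<close>

lemma Taylor_product_gt_960:
  fixes x :: real
  assumes "0 \<le> x" "x \<le> 2.4675"
  shows "960 < (1 - x/6) * (1703.125 - 477.34375 * (1 - x/2 + x^2/24))"
proof -
  define b :: real where "b = 2.4675"
  have "0 \<le> (x - b)^2 * (x + 2*b)"
    using assms by (simp add: b_def)
  also have "(x - b)^2 * (x + 2*b) = x^3 - 3*b^2*x + 2*b^3"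
    by (simp add: algebra_simps power2_eq_square power3_eq_cube)
  finally have cube: "0 \<le> x^3 - 3*b^2*x + 2*b^3" .
  have "0 \<le> x * (b - x)"
    using assms by (simp add: b_def)
  then have square: "0 \<le> b*x - x^2"
    by (simp add: algebra_simps power2_eq_square)
  have "(1 - x/6) * (1703.125 - 477.34375 * (1 - x/2 + x^2/24))
      = 1225.78125 + (238.671875 - 1225.78125/6) * x - (477.34375/24 + 238.671875/6) * x^2
        + 477.34375/144 * x^3"
    by (simp add: field_simps power2_eq_square power3_eq_cube)
  then show ?thesis
    using cube square assms unfolding b_def by (simp add: power_divide)
qed

lemma f_alpha_five_halves_neg:
  assumes "0 < \<alpha>" "\<alpha> \<le> pi/2"
  shows "f_alpha \<alpha> (5/2) < 0"
proof -
  define P where "P = 1703.125 - 477.34375 * (1 - \<alpha>^2/2 + \<alpha>^4/24)"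
  have "\<alpha> \<le> 3.1415926535899 / 2"
    using assms(2) pi_approx(2) by simp
  then have "\<alpha>^2 \<le> (3.1415926535899 / 2)^2"
    using assms(1) by (intro power_mono) auto
  then have \<alpha>_sq: "\<alpha>^2 \<le> 2.4675"
    by (simp add: power_divide)
  then have "(\<alpha>^2)^2 \<le> 2.4675^2"
    by (intro power_mono) auto
  then have \<alpha>_pow4: "\<alpha>^4 \<le> 7"
    by (simp add: power_divide flip: power_mult)
  have "960 < (1 - \<alpha>^2/6) * P"
    using Taylor_product_gt_960[of "\<alpha>^2"] \<alpha>_sq by (simp add: P_def flip: power_mult)
  then have "\<alpha> * 960 < \<alpha> * ((1 - \<alpha>^2/6) * P)"
    using assms(1) by (rule mult_strict_left_mono)
  also have "\<dots> = (\<alpha> - \<alpha>^3/6) * P"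
    by (simp add: algebra_simps power2_eq_square power3_eq_cube)
  also have "\<dots> \<le> sin \<alpha> * (1703.125 - 477.34375 * cos \<alpha>)"
  proof (intro mult_mono)
    show "\<alpha> - \<alpha>^3/6 \<le> sin \<alpha>"
      using assms pi_ge_two by (intro sin_ge_cubic_Taylor) auto
    show "P \<le> 1703.125 - 477.34375 * cos \<alpha>"
      using cos_le_quartic_Taylor[OF assms] by (simp add: P_def)
    show "0 \<le> P"
      using \<alpha>_pow4 by (simp add: P_def) (use zero_le_power2[of \<alpha>] in linarith)
    show "0 \<le> sin \<alpha>"
      using assms pi_ge_two by (intro sin_ge_zero) auto
  qed
  finally show ?thesis
    unfolding f_alpha_five_halves by simp
qed

theorem lemma2:
  fixes \<alpha> d :: real
  assumes "0 < \<alpha>" and "\<alpha> \<le> pi / 2" and "5 / 2 \<le> d"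
  shows "f_alpha \<alpha> d < 0"
proof -
  have "0 \<le> sin \<alpha>"
    using assms pi_ge_two by (intro sin_ge_zero) auto
  then have "f_alpha \<alpha> d \<le> f_alpha \<alpha> (5/2)"
    using assms(3) by (intro f_alpha_antimono) auto
  also have "\<dots> < 0"
    using assms(1,2) by (rule f_alpha_five_halves_neg)
  finally show ?thesis .
qed

end
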